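(* Every LAD-AG-groupoid $S$ is paramedial, i.e. $(ab)(cd)=(db)(ca)$ for all $a,b,c,d\in S$, and is left nuclear square, i.e. $a^2(bc)=(a^2b)c$ for all $a,b,c\in S$, where $a^2=aa$.
   Context: A groupoid is a set $S$ with a binary operation written as juxtaposition; $ab\cdot c$ means $(ab)c$ and $a\cdot bc$ means $a(bc)$. An AG-groupoid is a groupoid satisfying the left invertive law $(ab)c=(cb)a$ for all $a,b,c\in S$. An LAD-AG-groupoid (left abelian distributive AG-groupoid) is an AG-groupoid satisfying $a(bc)=(ab)(ca)$ for all $a,b,c\in S$. *)

theory Defs
  imports Main
begin

definition AG_groupoid :: "('a \<Rightarrow> 'a \<Rightarrow> 'a) \<Rightarrow> bool" where
  "AG_groupoid f \<longleftrightarrow> (\<forall>a b c. f (f a b) c = f (f c b) a)"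

definition LAD_AG_groupoid :: "('a \<Rightarrow> 'a \<Rightarrow> 'a) \<Rightarrow> bool" where
  "LAD_AG_groupoid f \<longleftrightarrow> AG_groupoid f \<and> (\<forall>a b c. f a (f b c) = f (f a b) (f c a))"

definition paramedial :: "('a \<Rightarrow> 'a \<Rightarrow> 'a) \<Rightarrow> bool" where
  "paramedial f \<longleftrightarrow> (\<forall>a b c d. f (f a b) (f c d) = f (f d b) (f c a))"

definition left_nuclear_square :: "('a \<Rightarrow> 'a \<Rightarrow> 'a) \<Rightarrow> bool" where
  "left_nuclear_square f \<longleftrightarrow> (\<forall>a b c. f (f a a) (f b c) = f (f (f a a) b) c)"

end

theory Submission
  imports Defs
begin

(* The heart of the proof is that a LAD-AG-groupoid is left permutative,
   a(bc) = b(ac); paramediality then follows in two applications of it, and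
   the left nuclear square law from the auxiliary identity a(bc) = (bc)a^2.

   In LAD-AG-groupoids we first derive
   commutativity inside right factors, a(bc) = a(cb), and left distributivity,
   a(bc) = (ab)(ac).  From these: (ab)(ca) = (ba)(ca), hence
   a(bc) = (bc)(aa); together with (ab)(cc) = (cb)(aa) this gives left
   permutativity. *)

locale AG =
  fixes mult :: "'a \<Rightarrow> 'a \<Rightarrow> 'a"  (infixl "\<cdot>" 70)
  assumes left_invertive: "(a \<cdot> b) \<cdot> c = (c \<cdot> b) \<cdot> a"
begin

lemma medial: "(a \<cdot> b) \<cdot> (c \<cdot> d) = (a \<cdot> c) \<cdot> (b \<cdot> d)"
proof -
  have "(a \<cdot> b) \<cdot> (c \<cdot> d) = ((c \<cdot> d) \<cdot> b) \<cdot> a" by (rule left_invertive)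
  also have "(c \<cdot> d) \<cdot> b = (b \<cdot> d) \<cdot> c" by (rule left_invertive)
  also have "((b \<cdot> d) \<cdot> c) \<cdot> a = (a \<cdot> c) \<cdot> (b \<cdot> d)" by (rule left_invertive)
  finally show ?thesis .
qed

end

locale LAD = AG +
  assumes left_abelian_distributive: "a \<cdot> (b \<cdot> c) = (a \<cdot> b) \<cdot> (c \<cdot> a)"
begin

lemma right_factor_commute: "a \<cdot> (b \<cdot> c) = a \<cdot> (c \<cdot> b)"
proof -
  have "a \<cdot> (b \<cdot> c) = (a \<cdot> b) \<cdot> (c \<cdot> a)" by (rule left_abelian_distributive)
  also have "\<dots> = (a \<cdot> c) \<cdot> (b \<cdot> a)" by (rule medial)
  also have "\<dots> = a \<cdot> (c \<cdot> b)" by (rule left_abelian_distributive [symmetric])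
  finally show ?thesis .
qed

lemma left_distributive: "a \<cdot> (b \<cdot> c) = (a \<cdot> b) \<cdot> (a \<cdot> c)"
  using left_abelian_distributive right_factor_commute by metis

lemma square_left: "a \<cdot> (b \<cdot> c) = (a \<cdot> a) \<cdot> (b \<cdot> c)"
  using left_distributive medial by metis

lemma left_factor_commute: "(a \<cdot> b) \<cdot> (c \<cdot> a) = (b \<cdot> a) \<cdot> (c \<cdot> a)"
proof -
  have "(a \<cdot> b) \<cdot> (c \<cdot> a) = ((a \<cdot> b) \<cdot> c) \<cdot> ((a \<cdot> b) \<cdot> a)"
    by (rule left_distributive)
  also have "\<dots> = (((a \<cdot> b) \<cdot> a) \<cdot> c) \<cdot> (a \<cdot> b)" by (rule left_invertive)
  also have "\<dots> = (((a \<cdot> b) \<cdot> a) \<cdot> c) \<cdot> (b \<cdot> a)" by (rule right_factor_commute)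
  also have "\<dots> = ((b \<cdot> a) \<cdot> c) \<cdot> ((a \<cdot> b) \<cdot> a)" by (rule left_invertive)
  also have "\<dots> = ((b \<cdot> a) \<cdot> c) \<cdot> (a \<cdot> (a \<cdot> b))" by (rule right_factor_commute)
  also have "\<dots> = ((b \<cdot> a) \<cdot> c) \<cdot> (a \<cdot> (b \<cdot> a))" by (simp only: right_factor_commute)
  also have "\<dots> = ((b \<cdot> a) \<cdot> c) \<cdot> ((b \<cdot> a) \<cdot> a)" by (rule right_factor_commute)
  also have "\<dots> = (b \<cdot> a) \<cdot> (c \<cdot> a)" by (rule left_distributive [symmetric])
  finally show ?thesis .
qed

lemma left_mult_eq_right_square: "a \<cdot> (b \<cdot> c) = (b \<cdot> c) \<cdot> (a \<cdot> a)"
proof -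
  have "a \<cdot> (b \<cdot> c) = (a \<cdot> b) \<cdot> (c \<cdot> a)" by (rule left_abelian_distributive)
  also have "\<dots> = (b \<cdot> a) \<cdot> (c \<cdot> a)" by (rule left_factor_commute)
  also have "\<dots> = (b \<cdot> c) \<cdot> (a \<cdot> a)" by (rule medial)
  finally show ?thesis .
qed

lemma square_exchange: "(a \<cdot> b) \<cdot> (c \<cdot> c) = (c \<cdot> b) \<cdot> (a \<cdot> a)"
proof -
  have "(a \<cdot> b) \<cdot> (c \<cdot> c) = ((a \<cdot> b) \<cdot> c) \<cdot> ((a \<cdot> b) \<cdot> c)" by (rule left_distributive)
  also have "\<dots> = ((c \<cdot> b) \<cdot> a) \<cdot> ((c \<cdot> b) \<cdot> a)" by (simp only: left_invertive)
  also have "\<dots> = (c \<cdot> b) \<cdot> (a \<cdot> a)" by (rule left_distributive [symmetric])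
  finally show ?thesis .
qed

lemma left_permutative: "a \<cdot> (b \<cdot> c) = b \<cdot> (a \<cdot> c)"
proof -
  have "a \<cdot> (b \<cdot> c) = (b \<cdot> c) \<cdot> (a \<cdot> a)" by (rule left_mult_eq_right_square)
  also have "\<dots> = (a \<cdot> c) \<cdot> (b \<cdot> b)" by (rule square_exchange)
  also have "\<dots> = b \<cdot> (a \<cdot> c)" by (rule left_mult_eq_right_square [symmetric])
  finally show ?thesis .
qed

lemma paramedial: "(a \<cdot> b) \<cdot> (c \<cdot> d) = (d \<cdot> b) \<cdot> (c \<cdot> a)"
proof -
  have "(a \<cdot> b) \<cdot> (c \<cdot> d) = c \<cdot> ((a \<cdot> b) \<cdot> d)" by (rule left_permutative)
  also have "\<dots> = c \<cdot> ((d \<cdot> b) \<cdot> a)" by (simp only: left_invertive)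
  also have "\<dots> = (d \<cdot> b) \<cdot> (c \<cdot> a)" by (rule left_permutative)
  finally show ?thesis .
qed

lemma left_nuclear_square: "(a \<cdot> a) \<cdot> (b \<cdot> c) = ((a \<cdot> a) \<cdot> b) \<cdot> c"
proof -
  have "(a \<cdot> a) \<cdot> (b \<cdot> c) = a \<cdot> (b \<cdot> c)" by (rule square_left [symmetric])
  also have "\<dots> = a \<cdot> (c \<cdot> b)" by (rule right_factor_commute)
  also have "\<dots> = (c \<cdot> b) \<cdot> (a \<cdot> a)" by (rule left_mult_eq_right_square)
  also have "\<dots> = ((a \<cdot> a) \<cdot> b) \<cdot> c" by (rule left_invertive)
  finally show ?thesis .
qed

end

lemma LAD_AG_groupoid_imp_LAD: "LAD_AG_groupoid f \<Longrightarrow> LAD f"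
  unfolding LAD_AG_groupoid_def AG_groupoid_def
  by unfold_locales blast+

theorem corollary1:
  fixes f :: "'a \<Rightarrow> 'a \<Rightarrow> 'a"
  assumes "LAD_AG_groupoid f"
  shows "paramedial f \<and> left_nuclear_square f"
proof -
  interpret LAD f using assms by (rule LAD_AG_groupoid_imp_LAD)
  show ?thesis
    unfolding paramedial_def left_nuclear_square_def
    using paramedial left_nuclear_square by blast
qed

end
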